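(* Let $A\in\mathbb{C}^{n\times n}$ be written in the core-EP decomposition $A=U\begin{bmatrix}T&S\\0&N\end{bmatrix}U^*$ (as described in the context) and let $m\in\mathbb{N}=\{1,2,\dots\}$. Then $$A^{\#_m}=U\begin{bmatrix}T^{-1}&T^{-(m+1)}\tilde{T}_mP_{N^m}\\0&0\end{bmatrix}U^*,\qquad \tilde{T}_m=\sum_{i=0}^{m-1}T^iSN^{m-1-i}.$$
   Context: Core-EP decomposition: every $A\in\mathbb{C}^{n\times n}$ of index $k$ can be written as $A=U\begin{bmatrix}T&S\\0&N\end{bmatrix}U^*$ with $U$ unitary, $T\in\mathbb{C}^{t\times t}$ nonsingular, $t=\mathrm{rk}(A^k)$, and $N\in\mathbb{C}^{(n-t)\times(n-t)}$ nilpotent of index $k$ (blocks of size zero allowed). Here the index $\mathrm{Ind}(A)$ is the smallest nonnegative integer $k$ with $\mathcal{R}(A^k)=\mathcal{R}(A^{k+1})$, $A^0=I$. For a matrix $B$, $B^\dagger$ is its Moore–Penrose inverse and $P_B=BB^\dagger$. The core-EP inverse $A^{\mathrm{cEP}}$ is the unique $X$ with $XAX=X$ and $\mathcal{R}(X)=\mathcal{R}(X^* )=\mathcal{R}(A^k)$. For $m\in\mathbb{N}$, the $m$-weak group inverse is $A^{\mathrm{WG}_m}:=(A^{\mathrm{cEP}})^{m+1}A^m$ and the $m$-weak core inverse is $A^{\#_m}:=A^{\mathrm{WG}_m}P_{A^m}$. *)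

theory Defs
  imports "Jordan_Normal_Form.Schur_Decomposition" "Jordan_Normal_Form.DL_Rank"
    "Jordan_Normal_Form.Gauss_Jordan_Elimination"
begin

abbreviation adj :: "complex mat \<Rightarrow> complex mat" where
  "adj B \<equiv> mat_adjoint B"

definition unitary_mat :: "nat \<Rightarrow> complex mat \<Rightarrow> bool" where
  "unitary_mat n U \<longleftrightarrow> U \<in> carrier_mat n n \<and> U * adj U = 1\<^sub>m n \<and> adj U * U = 1\<^sub>m n"

definition mat_range :: "complex mat \<Rightarrow> complex vec set" where
  "mat_range B = {B *\<^sub>v x | x. x \<in> carrier_vec (dim_col B)}"

definition crank :: "complex mat \<Rightarrow> nat" where
  "crank B = vec_space.rank (dim_row B) B"

definition mat_index :: "complex mat \<Rightarrow> nat" where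
  "mat_index A = (LEAST k. mat_range (A ^\<^sub>m k) = mat_range (A ^\<^sub>m (k+1)))"

definition nil_index :: "complex mat \<Rightarrow> nat" where
  "nil_index N = (LEAST k. N ^\<^sub>m k = 0\<^sub>m (dim_row N) (dim_col N))"

definition mp_inverse :: "complex mat \<Rightarrow> complex mat" where
  "mp_inverse B = (THE X. X \<in> carrier_mat (dim_col B) (dim_row B) \<and>
      B * X * B = B \<and> X * B * X = X \<and> adj (B * X) = B * X \<and> adj (X * B) = X * B)"

definition proj_range :: "complex mat \<Rightarrow> complex mat" where
  "proj_range B = B * mp_inverse B"

definition core_ep_inverse :: "complex mat \<Rightarrow> complex mat" where
  "core_ep_inverse A = (THE X. X \<in> carrier_mat (dim_row A) (dim_row A) \<and> X * A * X = X \<and>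
      mat_range X = mat_range (A ^\<^sub>m mat_index A) \<and>
      mat_range (adj X) = mat_range (A ^\<^sub>m mat_index A))"

definition m_weak_group_inverse :: "nat \<Rightarrow> complex mat \<Rightarrow> complex mat" where
  "m_weak_group_inverse m A = (core_ep_inverse A) ^\<^sub>m (m+1) * A ^\<^sub>m m"

definition m_weak_core_inverse :: "nat \<Rightarrow> complex mat \<Rightarrow> complex mat" where
  "m_weak_core_inverse m A = m_weak_group_inverse m A * proj_range (A ^\<^sub>m m)"

definition inv_mat :: "complex mat \<Rightarrow> complex mat" where
  "inv_mat T = the (mat_inverse T)"

definition mat_sum :: "nat \<Rightarrow> nat \<Rightarrow> (nat \<Rightarrow> complex mat) \<Rightarrow> nat list \<Rightarrow> complex mat" where
  "mat_sum r c f xs = foldr (\<lambda>i acc. f i + acc) xs (0\<^sub>m r c)"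

end

theory Submission
  imports Defs
begin

(* In the coordinates given by U, A is block upper triangular with invertible corner T, so A^j
   has diagonal blocks T^j, N^j and corner T~_j = sum T^i S N^(j-1-i).  Because rk(A^k) = t, the
   block N^k vanishes (a nonzero entry of N^k together with the invertible T^k would give t + 1
   independent columns), hence R(A^k) is spanned by the first t coordinates and the core-EP
   inverse is C = U diag(T^-1, 0) adj U: it is the only outer inverse of A whose range and whose
   adjoint's range are R(A^k), and A C is the orthogonal projector Q = U diag(I, 0) adj U onto
   R(A^k).  The same block calculus gives P_(A^m) = U diag(I, P_(N^m)) adj U, because the
   projector onto the range of B is the unique Hermitian P with P B = B and R(P) contained in
   R(B); the Moore-Penrose inverse it is built from exists by the full-rank factorisation obtained
   from Gauss-Jordan elimination.  Multiplying out C^(m+1) A^m P_(A^m) blockwise yields the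
   formula. *)

section \<open>Adjoints, upper block triangular matrices and their powers\<close>

lemma dim_mat_adjoint [simp]: "dim_row (adj A) = dim_col A" "dim_col (adj A) = dim_row A"
  unfolding mat_adjoint_def by auto

lemma mat_adjoint_carrier_mat [simp]: "A \<in> carrier_mat n m \<Longrightarrow> adj A \<in> carrier_mat m n"
  by (auto intro: carrier_matI)

lemma index_mat_adjoint [simp]:
  "i < dim_col A \<Longrightarrow> j < dim_row A \<Longrightarrow> adj A $$ (i, j) = cnj (A $$ (j, i))"
  unfolding mat_adjoint_def by (subst mat_of_rows_index) auto

lemma mat_adjoint_adjoint [simp]: "adj (adj A) = A"
  by (rule eq_matI) auto

lemma mat_adjoint_zero [simp]: "adj (0\<^sub>m n m) = 0\<^sub>m m n"
  by (rule eq_matI) auto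

lemma mat_adjoint_one [simp]: "adj (1\<^sub>m n) = 1\<^sub>m n"
  by (rule eq_matI) auto

lemma mat_adjoint_mult:
  assumes "A \<in> carrier_mat n m" and "B \<in> carrier_mat m p"
  shows "adj (A * B) = adj B * adj A"
proof (rule eq_matI)
  fix i j assume "i < dim_row (adj B * adj A)" "j < dim_col (adj B * adj A)"
  with assms have i: "i < p" and j: "j < n" by auto
  have "adj (A * B) $$ (i, j) = cnj (\<Sum>l<m. A $$ (j, l) * B $$ (l, i))"
    using i j assms by (simp add: scalar_prod_def lessThan_atLeast0)
  also have "\<dots> = (\<Sum>l<m. cnj (B $$ (l, i)) * cnj (A $$ (j, l)))"
    by (simp add: cnj_sum mult.commute)
  also have "\<dots> = (adj B * adj A) $$ (i, j)"
    using i j assms by (simp add: scalar_prod_def lessThan_atLeast0)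
  finally show "adj (A * B) $$ (i, j) = (adj B * adj A) $$ (i, j)" .
qed (use assms in auto)

lemma mat_adjoint_four_block_mat:
  assumes "A \<in> carrier_mat n1 m1" "B \<in> carrier_mat n1 m2"
    and "C \<in> carrier_mat n2 m1" "D \<in> carrier_mat n2 m2"
  shows "adj (four_block_mat A B C D) = four_block_mat (adj A) (adj C) (adj B) (adj D)"
  by (rule eq_matI) (use assms in \<open>auto simp: four_block_mat_def\<close>)

lemma assoc_mult_mat':
  "dim_col A = dim_row B \<Longrightarrow> dim_col B = dim_row C \<Longrightarrow> A * B * C = A * (B * C)"
  by (rule assoc_mult_mat[of A "dim_row A" "dim_col A" B "dim_col B" C "dim_col C"]) auto

lemma dim_mat_sum [simp]: "dim_row (mat_sum r c f xs) = r" "dim_col (mat_sum r c f xs) = c"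
  unfolding mat_sum_def by (induct xs) auto

lemma mat_sum_carrier_mat [simp]: "mat_sum r c f xs \<in> carrier_mat r c"
  by (auto intro: carrier_matI)

lemma mat_sum_Nil [simp]: "mat_sum r c f [] = 0\<^sub>m r c"
  by (simp add: mat_sum_def)

lemma mat_sum_Cons [simp]: "mat_sum r c f (x # xs) = f x + mat_sum r c f xs"
  by (simp add: mat_sum_def)

lemma mat_sum_cong:
  "(\<And>i. i \<in> set xs \<Longrightarrow> f i = g i) \<Longrightarrow> mat_sum r c f xs = mat_sum r c g xs"
  by (induct xs) auto

lemma mat_sum_append_singleton:
  assumes "\<And>i. i \<in> set (xs @ [x]) \<Longrightarrow> f i \<in> carrier_mat r c"
  shows "mat_sum r c f (xs @ [x]) = mat_sum r c f xs + f x"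
  using assms by (induct xs) (auto simp: assoc_add_mat[of _ r c])

lemma mat_sum_mult_right:
  assumes "\<And>i. i \<in> set xs \<Longrightarrow> f i \<in> carrier_mat r c" and "N \<in> carrier_mat c d"
  shows "mat_sum r c f xs * N = mat_sum r d (\<lambda>i. f i * N) xs"
  using assms by (induct xs) (auto simp: add_mult_distrib_mat[of _ r c])

lemma mult_four_block_mat_upper:
  fixes A1 B1 D1 A2 B2 D2 :: "'a :: semiring_0 mat"
  assumes "dim_col A1 = c1" "dim_row B1 = dim_row A1" "dim_col B1 = c2"
    and "dim_row D1 = r2" "dim_col D1 = c2" "dim_row A2 = c1" "dim_col A2 = d1"
    and "dim_row B2 = c1" "dim_row D2 = c2" "dim_col D2 = dim_col B2"
  shows "four_block_mat A1 B1 (0\<^sub>m r2 c1) D1 * four_block_mat A2 B2 (0\<^sub>m c2 d1) D2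
    = four_block_mat (A1 * A2) (A1 * B2 + B1 * D2) (0\<^sub>m r2 d1) (D1 * D2)"
proof -
  have A1: "A1 \<in> carrier_mat (dim_row A1) c1" and B1: "B1 \<in> carrier_mat (dim_row A1) c2"
    and D1: "D1 \<in> carrier_mat r2 c2" and A2: "A2 \<in> carrier_mat c1 d1"
    and B2: "B2 \<in> carrier_mat c1 (dim_col B2)" and D2: "D2 \<in> carrier_mat c2 (dim_col B2)"
    by (intro carrier_matI refl assms)+
  have "four_block_mat A1 B1 (0\<^sub>m r2 c1) D1 * four_block_mat A2 B2 (0\<^sub>m c2 d1) D2
    = four_block_mat (A1 * A2 + B1 * 0\<^sub>m c2 d1) (A1 * B2 + B1 * D2)
        (0\<^sub>m r2 c1 * A2 + D1 * 0\<^sub>m c2 d1) (0\<^sub>m r2 c1 * B2 + D1 * D2)"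
    by (rule mult_four_block_mat[OF A1 B1 zero_carrier_mat D1 A2 B2 zero_carrier_mat D2])
  also have "A1 * A2 + B1 * 0\<^sub>m c2 d1 = A1 * A2"
    unfolding right_mult_zero_mat[OF B1] by (rule right_add_zero_mat[OF mult_carrier_mat[OF A1 A2]])
  also have "0\<^sub>m r2 c1 * A2 + D1 * 0\<^sub>m c2 d1 = 0\<^sub>m r2 d1"
    unfolding left_mult_zero_mat[OF A2] right_mult_zero_mat[OF D1] by (rule right_add_zero_mat) simp
  also have "0\<^sub>m r2 c1 * B2 + D1 * D2 = D1 * D2"
    unfolding left_mult_zero_mat[OF B2] by (rule left_add_zero_mat[OF mult_carrier_mat[OF D1 D2]])
  finally show ?thesis .
qed

lemma mat_sum_corner_Suc:
  fixes T S N :: "complex mat"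
  assumes T: "T \<in> carrier_mat t t" and S: "S \<in> carrier_mat t p" and N: "N \<in> carrier_mat p p"
  shows "mat_sum t p (\<lambda>i. T ^\<^sub>m i * S * N ^\<^sub>m (Suc j - 1 - i)) [0..<Suc j]
    = T ^\<^sub>m j * S + mat_sum t p (\<lambda>i. T ^\<^sub>m i * S * N ^\<^sub>m (j - 1 - i)) [0..<j] * N"
proof -
  let ?term = "\<lambda>j i. T ^\<^sub>m i * S * N ^\<^sub>m (j - 1 - i)"
  have split: "mat_sum t p (?term (Suc j)) [0..<Suc j]
    = mat_sum t p (?term (Suc j)) [0..<j] + ?term (Suc j) j"
    unfolding upt_Suc_append[OF le0] by (rule mat_sum_append_singleton) (use T S N in auto)
  have "mat_sum t p (?term (Suc j)) [0..<j] = mat_sum t p (\<lambda>i. ?term j i * N) [0..<j]"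
  proof (rule mat_sum_cong)
    fix i assume "i \<in> set [0..<j]"
    then have "Suc j - 1 - i = Suc (j - 1 - i)" by auto
    then show "?term (Suc j) i = ?term j i * N"
      using T S N by (simp add: assoc_mult_mat')
  qed
  also have "\<dots> = mat_sum t p (?term j) [0..<j] * N"
    by (rule mat_sum_mult_right[symmetric]) (use T S N in auto)
  finally have sum: "mat_sum t p (?term (Suc j)) [0..<j] = mat_sum t p (?term j) [0..<j] * N" .
  have "?term (Suc j) j = T ^\<^sub>m j * S"
    using T carrier_matD[OF S] carrier_matD[OF N] by simp
  then show ?thesis
    unfolding split sum by (simp only:) (rule comm_add_mat, use T S N in auto)
qed

lemma pow_four_block_mat_upper:
  fixes T S N :: "complex mat"
  assumes T: "T \<in> carrier_mat t t" and S: "S \<in> carrier_mat t p" and N: "N \<in> carrier_mat p p"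
  shows "four_block_mat T S (0\<^sub>m p t) N ^\<^sub>m j = four_block_mat (T ^\<^sub>m j)
    (mat_sum t p (\<lambda>i. T ^\<^sub>m i * S * N ^\<^sub>m (j - 1 - i)) [0..<j]) (0\<^sub>m p t) (N ^\<^sub>m j)"
proof (induct j)
  case 0
  then show ?case using T N by simp
next
  case (Suc j)
  have "four_block_mat T S (0\<^sub>m p t) N ^\<^sub>m Suc j = four_block_mat (T ^\<^sub>m j * T)
      (T ^\<^sub>m j * S + mat_sum t p (\<lambda>i. T ^\<^sub>m i * S * N ^\<^sub>m (j - 1 - i)) [0..<j] * N)
      (0\<^sub>m p t) (N ^\<^sub>m j * N)"
    unfolding pow_mat.simps(2) Suc by (rule mult_four_block_mat_upper) (use T S N in auto)
  then show ?case
    by (simp only: mat_sum_corner_Suc[OF T S N, symmetric] pow_mat.simps(2))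
qed

lemma zero_pow_mat_Suc [simp]: "(0\<^sub>m n n :: 'a :: semiring_1 mat) ^\<^sub>m Suc j = 0\<^sub>m n n"
  by (induct j) auto

lemma inv_mat_inverts:
  assumes T: "T \<in> carrier_mat t t" and "invertible_mat T"
  shows "inv_mat T \<in> carrier_mat t t" "T * inv_mat T = 1\<^sub>m t" "inv_mat T * T = 1\<^sub>m t"
proof -
  from \<open>invertible_mat T\<close> obtain B where "inverts_mat T B" "inverts_mat B T"
    unfolding invertible_mat_def by blast
  with T have "B \<in> carrier_mat t t" "T * B = 1\<^sub>m t" "B * T = 1\<^sub>m t"
    unfolding inverts_mat_def by (auto intro!: carrier_matI dest: arg_cong[of _ _ dim_col])
  with T have "T \<in> Units (ring_mat TYPE(complex) t ())"
    unfolding Units_def ring_mat_def by auto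
  then obtain C where "mat_inverse T = Some C"
    using mat_inverse(1)[OF T] by fastforce
  with mat_inverse(2)[OF T]
  show "inv_mat T \<in> carrier_mat t t" "T * inv_mat T = 1\<^sub>m t" "inv_mat T * T = 1\<^sub>m t"
    unfolding inv_mat_def by auto
qed

lemma pow_mat_left_inverse:
  fixes X Y :: "'a :: semiring_1 mat"
  assumes X: "X \<in> carrier_mat n n" and Y: "Y \<in> carrier_mat n n" and YX: "Y * X = 1\<^sub>m n"
  shows "Y ^\<^sub>m j * X ^\<^sub>m j = 1\<^sub>m n"
proof (induct j)
  case (Suc j)
  have "X ^\<^sub>m Suc i = X * X ^\<^sub>m i" for i
  proof (induct i)
    case (Suc i)
    then show ?case
      using X by (simp add: assoc_mult_mat[of X n n "X ^\<^sub>m i" n X n])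
  qed (use X in simp)
  then have "Y ^\<^sub>m Suc j * X ^\<^sub>m Suc j = Y ^\<^sub>m j * ((Y * X) * X ^\<^sub>m j)"
    using X Y by (simp add: assoc_mult_mat[of _ n n _ n _ n])
  with Suc show ?case using X Y YX by simp
qed (use X Y in simp)

section \<open>Ranges and the core-EP inverse\<close>

lemma mat_range_mult_subset:
  assumes "X \<in> carrier_mat n p" and "Y \<in> carrier_mat p q"
  shows "mat_range (X * Y) \<subseteq> mat_range X"
proof
  fix v assume "v \<in> mat_range (X * Y)"
  then obtain x where "x \<in> carrier_vec q" and "v = (X * Y) *\<^sub>v x"
    unfolding mat_range_def using assms by auto
  with assms have "v = X *\<^sub>v (Y *\<^sub>v x)" and "Y *\<^sub>v x \<in> carrier_vec (dim_col X)"
    by auto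
  then show "v \<in> mat_range X" unfolding mat_range_def by blast
qed

lemma mat_range_eqI:
  assumes "X \<in> carrier_mat n p" "Y \<in> carrier_mat n q"
    and "Z1 \<in> carrier_mat q p" "Z2 \<in> carrier_mat p q"
    and "X = Y * Z1" and "Y = X * Z2"
  shows "mat_range X = mat_range Y"
proof
  show "mat_range X \<subseteq> mat_range Y"
    using mat_range_mult_subset[OF assms(2,3)] unfolding assms(5)[symmetric] .
  show "mat_range Y \<subseteq> mat_range X"
    using mat_range_mult_subset[OF assms(1,4)] unfolding assms(6)[symmetric] .
qed

lemma mat_range_subset_factor:
  assumes X: "X \<in> carrier_mat n p" and Y: "Y \<in> carrier_mat n q"
    and sub: "mat_range X \<subseteq> mat_range Y"
  obtains W where "W \<in> carrier_mat q p" and "X = Y * W"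
proof -
  have "\<exists>w \<in> carrier_vec q. col X j = Y *\<^sub>v w" if j: "j < p" for j
  proof -
    have "col X j = X *\<^sub>v unit_vec p j"
      using X j by (auto intro!: eq_vecI simp: scalar_prod_right_unit)
    then have "col X j \<in> mat_range X"
      unfolding mat_range_def using X by auto
    with sub Y show ?thesis unfolding mat_range_def by auto
  qed
  then obtain w where w: "\<And>j. j < p \<Longrightarrow> w j \<in> carrier_vec q \<and> col X j = Y *\<^sub>v w j"
    by metis
  define W where "W = mat q p (\<lambda>(i, j). w j $ i)"
  have "X = Y * W"
  proof (rule eq_matI)
    fix i j assume "i < dim_row (Y * W)" "j < dim_col (Y * W)"
    with X Y have i: "i < n" and j: "j < p" by (auto simp: W_def)
    have "col W j = w j"
      using w[OF j] j unfolding W_def by (auto intro!: eq_vecI)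
    have "(Y * W) $$ (i, j) = (Y *\<^sub>v col W j) $ i"
      using i j X Y by (simp add: W_def)
    also have "\<dots> = X $$ (i, j)"
      using \<open>col W j = w j\<close> w[OF j, THEN conjunct2, symmetric] i j X by simp
    finally show "X $$ (i, j) = (Y * W) $$ (i, j)" ..
  qed (use X Y in \<open>auto simp: W_def\<close>)
  then show ?thesis using that[of W] by (simp add: W_def)
qed

lemma idempotent_mult_of_mat_range_subset:
  assumes P: "P \<in> carrier_mat n n" and X: "X \<in> carrier_mat n p"
    and idem: "P * P = P" and sub: "mat_range X \<subseteq> mat_range P"
  shows "P * X = X"
proof -
  obtain W where W: "W \<in> carrier_mat n p" and XW: "X = P * W"
    using mat_range_subset_factor[OF X P sub] .
  have "P * X = (P * P) * W" unfolding XW using P W by simp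
  with idem XW show ?thesis by simp
qed

lemma mult_hermitian_idempotent_of_mat_range_subset:
  assumes P: "P \<in> carrier_mat n n" and X: "X \<in> carrier_mat p n"
    and herm: "adj P = P" and idem: "P * P = P" and sub: "mat_range (adj X) \<subseteq> mat_range P"
  shows "X * P = X"
proof -
  have "P * adj X = adj X"
    by (rule idempotent_mult_of_mat_range_subset[OF P mat_adjoint_carrier_mat[OF X] idem sub])
  then have "adj (adj X) * adj P = adj (adj X)"
    using mat_adjoint_mult[of P n n "adj X" p] P X by (metis mat_adjoint_carrier_mat)
  with herm show ?thesis by simp
qed

lemma outer_inverse_unique:
  assumes X: "X \<in> carrier_mat n n" and A: "A \<in> carrier_mat n n" and C: "C \<in> carrier_mat n n"
    and W: "W \<in> carrier_mat n n"
    and XAX: "X * A * X = X" and XQ: "X * Q = X" and QXW: "Q = X * W"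
    and AC: "A * C = Q" and QC: "Q * C = C"
  shows "X = C"
proof -
  have "X = X * A * (Q * C)"
    using XQ AC QC by (simp add: assoc_mult_mat[OF X A C])
  also have "Q * C = X * (W * C)"
    using QXW assoc_mult_mat[OF X W C] by simp
  also have "X * A * (X * (W * C)) = (X * A * X) * (W * C)"
    by (rule assoc_mult_mat[symmetric]) (use X A W C in auto)
  also have "\<dots> = Q * C"
    using QXW assoc_mult_mat[OF X W C] by (simp only: XAX)
  finally show ?thesis
    using QC by simp
qed

lemma core_ep_inverse_eqI:
  assumes A: "A \<in> carrier_mat n n" and C: "C \<in> carrier_mat n n" and Q: "Q \<in> carrier_mat n n"
    and herm: "adj Q = Q" and idem: "Q * Q = Q"
    and range_Q: "mat_range Q = mat_range (A ^\<^sub>m mat_index A)"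
    and AC: "A * C = Q" and range_C: "mat_range C = mat_range Q"
    and range_adj_C: "mat_range (adj C) = mat_range Q"
  shows "core_ep_inverse A = C"
  unfolding core_ep_inverse_def
proof (rule the_equality)
  have "C * Q = C"
    using mult_hermitian_idempotent_of_mat_range_subset[OF Q C herm idem] range_adj_C by simp
  then have "C * A * C = C"
    using AC by (simp add: assoc_mult_mat[OF C A C])
  with A C range_Q range_C range_adj_C
  show "C \<in> carrier_mat (dim_row A) (dim_row A) \<and> C * A * C = C \<and>
    mat_range C = mat_range (A ^\<^sub>m mat_index A) \<and>
    mat_range (adj C) = mat_range (A ^\<^sub>m mat_index A)"
    by simp
next
  fix X
  assume "X \<in> carrier_mat (dim_row A) (dim_row A) \<and> X * A * X = X \<and>
    mat_range X = mat_range (A ^\<^sub>m mat_index A) \<and>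
    mat_range (adj X) = mat_range (A ^\<^sub>m mat_index A)"
  with A range_Q have X: "X \<in> carrier_mat n n" and XAX: "X * A * X = X"
    and range_X: "mat_range X = mat_range Q" and range_adj_X: "mat_range (adj X) = mat_range Q"
    by auto
  obtain W where "W \<in> carrier_mat n n" and "Q = X * W"
    using mat_range_subset_factor[OF Q X] range_X by auto
  moreover have "X * Q = X"
    using mult_hermitian_idempotent_of_mat_range_subset[OF Q X herm idem] range_adj_X by simp
  moreover have "Q * C = C"
    using idempotent_mult_of_mat_range_subset[OF Q C idem] range_C by simp
  ultimately show "X = C"
    using outer_inverse_unique[OF X A C _ XAX _ _ AC] by blast
qed

section \<open>The Moore-Penrose inverse and orthogonal projectors\<close>

definition is_mp_inverse :: "complex mat \<Rightarrow> complex mat \<Rightarrow> bool" where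
  "is_mp_inverse B X \<longleftrightarrow> X \<in> carrier_mat (dim_col B) (dim_row B) \<and>
      B * X * B = B \<and> X * B * X = X \<and> adj (B * X) = B * X \<and> adj (X * B) = X * B"

lemma is_mp_inverse_unique:
  assumes B: "B \<in> carrier_mat n p" and X: "is_mp_inverse B X" and Y: "is_mp_inverse B Y"
  shows "X = Y"
proof -
  from X Y B have Xc: "X \<in> carrier_mat p n" and Yc: "Y \<in> carrier_mat p n"
    and X1: "B * X * B = B" "X * B * X = X" "adj (B * X) = B * X" "adj (X * B) = X * B"
    and Y1: "B * Y * B = B" "Y * B * Y = Y" "adj (B * Y) = B * Y" "adj (Y * B) = Y * B"
    unfolding is_mp_inverse_def by auto
  note simps = assoc_mult_mat' carrier_matD[OF B] carrier_matD[OF Xc] carrier_matD[OF Yc]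
  have BX: "B * X = B * Y"
  proof -
    have "B * X = (B * Y * B) * X" using Y1 by simp
    also have "\<dots> = adj (B * Y) * adj (B * X)"
      using X1(3) Y1(3) B Xc Yc by (simp add: simps)
    also have "\<dots> = adj ((B * X) * (B * Y))"
      using B Xc Yc by (simp add: mat_adjoint_mult[of "B * X" n n "B * Y" n])
    also have "(B * X) * (B * Y) = (B * X * B) * Y"
      using B Xc Yc by (simp add: simps)
    finally show ?thesis using X1 Y1 by simp
  qed
  have XB: "X * B = Y * B"
  proof -
    have "X * B = X * (B * Y * B)" using Y1 by simp
    also have "\<dots> = adj (X * B) * adj (Y * B)"
      using X1(4) Y1(4) B Xc Yc by (simp add: simps)
    also have "\<dots> = adj ((Y * B) * (X * B))"
      using B Xc Yc by (simp add: mat_adjoint_mult[of "Y * B" p p "X * B" p])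
    also have "(Y * B) * (X * B) = Y * (B * X * B)"
      using B Xc Yc by (simp add: simps)
    finally show ?thesis using X1 Y1 by simp
  qed
  have "X = Y * B * X" using X1 XB by simp
  also have "\<dots> = Y * B * Y" using BX B Xc Yc by (simp add: simps)
  finally show ?thesis using Y1 by simp
qed

lemma mp_inverse_eqI:
  assumes B: "B \<in> carrier_mat n p" and X: "is_mp_inverse B X"
  shows "mp_inverse B = X"
proof -
  have "mp_inverse B = (THE X. is_mp_inverse B X)"
    unfolding mp_inverse_def is_mp_inverse_def ..
  also have "\<dots> = X"
    by (rule the_equality[where P = "is_mp_inverse B", OF X]) (rule is_mp_inverse_unique[OF B _ X])
  finally show ?thesis .
qed

lemma mult_mat_vec_cscalar_prod:
  assumes H: "H \<in> carrier_mat n r" and v: "v \<in> carrier_vec r" and w: "w \<in> carrier_vec n"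
  shows "(H *\<^sub>v v) \<bullet>c w = v \<bullet>c (adj H *\<^sub>v w)"
proof -
  have "(H *\<^sub>v v) \<bullet>c w = (\<Sum>i<n. \<Sum>j<r. H $$ (i, j) * v $ j * cnj (w $ i))"
    using H v w by (simp add: scalar_prod_def lessThan_atLeast0 sum_distrib_right)
  also have "\<dots> = (\<Sum>j<r. \<Sum>i<n. H $$ (i, j) * v $ j * cnj (w $ i))"
    by (rule sum.swap)
  also have "\<dots> = v \<bullet>c (adj H *\<^sub>v w)"
    using H v w by (simp add: scalar_prod_def lessThan_atLeast0 cnj_sum sum_distrib_left mult_ac)
  finally show ?thesis .
qed

lemma det_gram_mat_nonzero:
  assumes H: "H \<in> carrier_mat n r" and L: "L \<in> carrier_mat r n" and LH: "L * H = 1\<^sub>m r"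
  shows "det (adj H * H) \<noteq> 0"
proof
  have G: "adj H * H \<in> carrier_mat r r" using H by (simp add: mult_carrier_mat[of _ r n])
  assume "det (adj H * H) = 0"
  then obtain v where v: "v \<in> carrier_vec r" "v \<noteq> 0\<^sub>v r"
    "(adj H * H) *\<^sub>v v = 0\<^sub>v r"
    unfolding det_0_iff_vec_prod_zero_field[OF G] by blast
  have Hv: "H *\<^sub>v v \<in> carrier_vec n" using H v by simp
  have "adj H *\<^sub>v (H *\<^sub>v v) = 0\<^sub>v r"
    using v(3) assoc_mult_mat_vec[OF mat_adjoint_carrier_mat[OF H] H v(1)] by simp
  then have "(H *\<^sub>v v) \<bullet>c (H *\<^sub>v v) = 0"
    using mult_mat_vec_cscalar_prod[OF H v(1) Hv] v(1) by simp
  then have "H *\<^sub>v v = 0\<^sub>v n"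
    using Hv by simp
  then have "v = L *\<^sub>v 0\<^sub>v n"
    using LH H L v by (metis assoc_mult_mat_vec one_mult_mat_vec)
  also have "\<dots> = 0\<^sub>v r"
    using L by (intro eq_vecI) (auto simp: scalar_prod_def)
  finally show False using v by simp
qed

lemma mat_adjoint_inverse_hermitian:
  assumes P: "P \<in> carrier_mat r r" and M: "M \<in> carrier_mat r r"
    and PM: "P * M = 1\<^sub>m r" and herm: "adj P = P"
  shows "adj M = M"
proof -
  have "adj M * adj P = 1\<^sub>m r"
    using mat_adjoint_mult[OF P M] PM by simp
  have "adj M = adj M * (P * M)"
    using PM by (simp add: carrier_matD[OF M])
  also have "\<dots> = adj M * adj P * M"
    unfolding herm by (rule assoc_mult_mat[symmetric, OF mat_adjoint_carrier_mat[OF M] P M])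
  also have "\<dots> = M"
    unfolding \<open>adj M * adj P = 1\<^sub>m r\<close> by (rule left_mult_one_mat[OF M])
  finally show ?thesis .
qed

lemma gram_mat_inverse:
  assumes H: "H \<in> carrier_mat n r" and L: "L \<in> carrier_mat r n" and LH: "L * H = 1\<^sub>m r"
  obtains M where "M \<in> carrier_mat r r" "adj H * H * M = 1\<^sub>m r"
    "M * (adj H * H) = 1\<^sub>m r" "adj M = M"
proof -
  have G: "adj H * H \<in> carrier_mat r r" using H by (simp add: mult_carrier_mat[of _ r n])
  obtain M where M: "M \<in> carrier_mat r r" "M * (adj H * H) = 1\<^sub>m r" "adj H * H * M = 1\<^sub>m r"
    using det_non_zero_imp_unit[OF G det_gram_mat_nonzero[OF H L LH], of "()"]
    unfolding Units_def by (auto simp: ring_mat_def)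
  moreover have "adj (adj H * H) = adj H * H"
    using mat_adjoint_mult[of "adj H" r n H r] H by simp
  ultimately show ?thesis
    using that mat_adjoint_inverse_hermitian[OF G] by blast
qed

lemma is_mp_inverse_full_rank_product:
  assumes F: "F \<in> carrier_mat n r" and G: "G \<in> carrier_mat r p"
    and M1: "M1 \<in> carrier_mat r r" "M1 * (adj F * F) = 1\<^sub>m r" "adj M1 = M1"
    and M2: "M2 \<in> carrier_mat r r" "G * adj G * M2 = 1\<^sub>m r" "adj M2 = M2"
  shows "is_mp_inverse (F * G) (adj G * M2 * M1 * adj F)" (is "is_mp_inverse _ ?X")
proof -
  note simps = assoc_mult_mat' carrier_matD[OF F] carrier_matD[OF G]
    carrier_matD[OF M1(1)] carrier_matD[OF M2(1)]
  have FGX: "F * G * ?X = F * M1 * adj F"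
  proof -
    have "F * G * ?X = F * ((G * adj G * M2) * (M1 * adj F))"
      using F G M1(1) M2(1) by (simp add: simps)
    then show ?thesis unfolding M2(2) using F M1(1) by (simp add: simps)
  qed
  have XFG: "?X * (F * G) = adj G * M2 * G"
  proof -
    have "?X * (F * G) = adj G * M2 * (M1 * (adj F * F)) * G"
      using F G M1(1) M2(1) by (simp add: simps)
    then show ?thesis unfolding M1(2) using G M2(1) by (simp add: simps)
  qed
  show ?thesis
    unfolding is_mp_inverse_def
  proof (intro conjI)
    have "?X \<in> carrier_mat p n"
      using F G M1(1) M2(1) by (meson mult_carrier_mat mat_adjoint_carrier_mat)
    then show "?X \<in> carrier_mat (dim_col (F * G)) (dim_row (F * G))"
      using F G by simp
    have "F * G * ?X * (F * G) = F * (M1 * (adj F * F)) * G"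
      unfolding FGX using F G M1(1) by (simp add: simps)
    then show "F * G * ?X * (F * G) = F * G"
      unfolding M1(2) using F G by (simp add: simps)
    have "?X * (F * G) * ?X = adj G * M2 * (G * adj G * M2) * M1 * adj F"
      unfolding XFG using F G M1(1) M2(1) by (simp add: simps)
    then show "?X * (F * G) * ?X = ?X"
      unfolding M2(2) using G M2(1) by (simp add: simps)
    have "adj (F * M1 * adj F) = F * adj M1 * adj F"
      using F M1(1) by (simp add: mat_adjoint_mult[of _ n r _ n]
        mat_adjoint_mult[OF M1(1) mat_adjoint_carrier_mat[OF F]] simps)
    then show "adj (F * G * ?X) = F * G * ?X"
      unfolding FGX M1(3) .
    have "adj (adj G * M2 * G) = adj G * adj M2 * G"
      using G M2(1) by (simp add: mat_adjoint_mult[of _ p r _ p] mat_adjoint_mult[OF M2(1) G] simps)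
    then show "adj (?X * (F * G)) = ?X * (F * G)"
      unfolding XFG M2(3) .
  qed
qed

lemma pivot_fun_pivot_rows:
  assumes pf: "pivot_fun R f p" and dR: "dim_row R = n"
  obtains r where "r \<le> n" "\<And>i. i < r \<Longrightarrow> f i < p"
    "\<And>i. r \<le> i \<Longrightarrow> i < n \<Longrightarrow> f i = p"
proof -
  note pd = pivot_funD[OF dR pf]
  define r where "r = (LEAST i. i = n \<or> (i < n \<and> f i = p))"
  have r: "r = n \<or> (r < n \<and> f r = p)" and "r \<le> n"
    unfolding r_def by (rule LeastI[of _ n], simp, rule Least_le, simp)
  have low: "f i < p" if "i < r" for i
    using not_less_Least[OF that[unfolded r_def]] \<open>r \<le> n\<close> that pd(1)[of i] by fastforce
  have high: "i < n \<longrightarrow> f i = p" if "r \<le> i" for i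
    using that
  proof (induct rule: dec_induct)
    case base
    then show ?case using r by auto
  next
    case (step i)
    then show ?case using pd(1)[of "Suc i"] pd(3)[of i] by fastforce
  qed
  show ?thesis using that \<open>r \<le> n\<close> low high by blast
qed

lemma mult_mat_zero_rows_eq:
  assumes Q: "Q \<in> carrier_mat m n" and R: "R \<in> carrier_mat n p" and "r \<le> n"
    and zero: "\<And>i j. r \<le> i \<Longrightarrow> i < n \<Longrightarrow> j < p \<Longrightarrow> R $$ (i, j) = 0"
  shows "Q * R = mat m r (\<lambda>(i, j). Q $$ (i, j)) * mat r p (\<lambda>(i, j). R $$ (i, j))"
    (is "_ = ?F * ?G")
proof (rule eq_matI)
  fix i j assume "i < dim_row (?F * ?G)" "j < dim_col (?F * ?G)"
  then have i: "i < m" and j: "j < p" by auto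
  have "(Q * R) $$ (i, j)
    = (\<Sum>l = 0..<r. Q $$ (i, l) * R $$ (l, j)) + (\<Sum>l = r..<n. Q $$ (i, l) * R $$ (l, j))"
    using i j Q R \<open>r \<le> n\<close> by (simp add: scalar_prod_def sum.atLeastLessThan_concat)
  also have "(\<Sum>l = r..<n. Q $$ (i, l) * R $$ (l, j)) = 0"
    using zero j by (intro sum.neutral) auto
  finally show "(Q * R) $$ (i, j) = (?F * ?G) $$ (i, j)"
    using i j \<open>r \<le> n\<close> by (simp add: scalar_prod_def)
qed (use Q R in auto)

lemma mult_leading_blocks_one:
  assumes P: "P \<in> carrier_mat n n" and Q: "Q \<in> carrier_mat n n" and PQ: "P * Q = 1\<^sub>m n"
    and "r \<le> n"
  shows "mat r n (\<lambda>(i, j). P $$ (i, j)) * mat n r (\<lambda>(i, j). Q $$ (i, j)) = 1\<^sub>m r" (is "?L = _")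
proof (rule eq_matI)
  fix i j assume "i < dim_row (1\<^sub>m r)" "j < dim_col (1\<^sub>m r)"
  then have i: "i < r" and j: "j < r" by auto
  have "?L $$ (i, j) = (P * Q) $$ (i, j)"
    using i j P Q \<open>r \<le> n\<close> by (simp add: scalar_prod_def)
  with i j \<open>r \<le> n\<close> show "?L $$ (i, j) = 1\<^sub>m r $$ (i, j)"
    unfolding PQ by simp
qed auto

lemma pivot_rows_right_inverse:
  fixes R :: "'a :: semiring_1 mat"
  assumes pf: "pivot_fun R f p" and dR: "dim_row R = n" and "r \<le> n"
    and low: "\<And>i. i < r \<Longrightarrow> f i < p"
  shows "mat r p (\<lambda>(i, j). R $$ (i, j)) * mat p r (\<lambda>(j, i). if j = f i then 1 else 0) = 1\<^sub>m r"
    (is "?L = _")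
proof (rule eq_matI)
  note pd = pivot_funD[OF dR pf]
  fix i i' assume "i < dim_row (1\<^sub>m r)" "i' < dim_col (1\<^sub>m r)"
  then have i: "i < r" and i': "i' < r" by auto
  have "?L $$ (i, i') = (\<Sum>j \<in> {0..<p}. R $$ (i, j) * (if j = f i' then 1 else 0))"
    using i i' by (simp add: scalar_prod_def)
  also have "\<dots> = (\<Sum>j \<in> {0..<p}. if j = f i' then R $$ (i, j) else 0)"
    by (rule sum.cong) auto
  also have "\<dots> = R $$ (i, f i')"
    using low[OF i'] by simp
  also have "\<dots> = 1\<^sub>m r $$ (i, i')"
    using pd(4)[of i'] pd(5)[of i' i] low[OF i'] i i' \<open>r \<le> n\<close> by auto
  finally show "?L $$ (i, i') = 1\<^sub>m r $$ (i, i')" .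
qed auto

lemma full_rank_factorization:
  fixes B :: "complex mat"
  assumes B: "B \<in> carrier_mat n p"
  obtains r F G L E where "F \<in> carrier_mat n r" "G \<in> carrier_mat r p" "L \<in> carrier_mat r n"
    "E \<in> carrier_mat p r" "L * F = 1\<^sub>m r" "G * E = 1\<^sub>m r" "B = F * G"
proof -
  define R where "R = gauss_jordan_single B"
  note gj = gauss_jordan_single[OF B R_def[symmetric]]
  obtain P Q where PQ: "R = P * B" "P \<in> carrier_mat n n" "Q \<in> carrier_mat n n"
    "P * Q = 1\<^sub>m n" "Q * P = 1\<^sub>m n"
    using gj(4) by blast
  have R: "R \<in> carrier_mat n p" using gj(2) .
  then obtain f where pf: "pivot_fun R f p"
    using gj(3) unfolding row_echelon_form_def by auto
  have dR: "dim_row R = n" using R by simp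
  obtain r where "r \<le> n" and low: "\<And>i. i < r \<Longrightarrow> f i < p"
    and high: "\<And>i. r \<le> i \<Longrightarrow> i < n \<Longrightarrow> f i = p"
    using pivot_fun_pivot_rows[OF pf dR] by blast
  have "B = Q * R"
    using PQ B by (simp add: assoc_mult_mat[symmetric, of Q n n P n B p])
  also have "\<dots> = mat n r (\<lambda>(i, j). Q $$ (i, j)) * mat r p (\<lambda>(i, j). R $$ (i, j))"
    using pivot_funD(2)[OF dR pf] high
    by (intro mult_mat_zero_rows_eq[OF PQ(3) R \<open>r \<le> n\<close>]) fastforce
  finally have BFG: "B = mat n r (\<lambda>(i, j). Q $$ (i, j)) * mat r p (\<lambda>(i, j). R $$ (i, j))" .
  show ?thesis
    by (rule that[OF _ _ _ _ mult_leading_blocks_one[OF PQ(2,3,4) \<open>r \<le> n\<close>]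
          pivot_rows_right_inverse[OF pf dR \<open>r \<le> n\<close> low] BFG]) auto
qed

lemma is_mp_inverse_mp_inverse:
  assumes B: "B \<in> carrier_mat n p"
  shows "is_mp_inverse B (mp_inverse B)"
proof -
  obtain r F G L E where F: "F \<in> carrier_mat n r" and G: "G \<in> carrier_mat r p"
    and L: "L \<in> carrier_mat r n" and E: "E \<in> carrier_mat p r"
    and LF: "L * F = 1\<^sub>m r" and GE: "G * E = 1\<^sub>m r" and BFG: "B = F * G"
    using full_rank_factorization[OF B] .
  obtain M1 where M1: "M1 \<in> carrier_mat r r" "adj F * F * M1 = 1\<^sub>m r"
    "M1 * (adj F * F) = 1\<^sub>m r" "adj M1 = M1"
    using gram_mat_inverse[OF F L LF] .
  have "adj E * adj G = 1\<^sub>m r"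
    using mat_adjoint_mult[OF G E] GE by simp
  then obtain M2 where M2: "M2 \<in> carrier_mat r r" "G * adj G * M2 = 1\<^sub>m r" "adj M2 = M2"
    using gram_mat_inverse[of "adj G" p r "adj E"] G E by auto
  have "is_mp_inverse B (adj G * M2 * M1 * adj F)"
    unfolding BFG by (rule is_mp_inverse_full_rank_product[OF F G M1(1,3,4) M2])
  with mp_inverse_eqI[OF B] show ?thesis by simp
qed

lemma proj_range_eqI:
  assumes B: "B \<in> carrier_mat n p" and P: "P \<in> carrier_mat n n" and herm: "adj P = P"
    and PB: "P * B = B" and Z: "Z \<in> carrier_mat p n" and BZ: "P = B * Z"
  shows "proj_range B = P"
proof -
  define X where "X = mp_inverse B"
  have Xc: "X \<in> carrier_mat p n" and BXB: "B * X * B = B" and BX_herm: "adj (B * X) = B * X"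
    using is_mp_inverse_mp_inverse[OF B] B unfolding X_def is_mp_inverse_def by auto
  have BX: "B * X \<in> carrier_mat n n" using B Xc by simp
  have "B * X * P = B * X * B * Z"
    unfolding BZ by (rule assoc_mult_mat[symmetric]) (use B Xc Z in auto)
  then have BXP: "B * X * P = P"
    unfolding BXB BZ[symmetric] .
  have PBX: "P * (B * X) = B * X"
    using PB P B Xc by (simp add: assoc_mult_mat[symmetric, of P n n B p X n])
  have "B * X = adj (P * (B * X))"
    unfolding PBX BX_herm ..
  also have "\<dots> = B * X * P"
    using mat_adjoint_mult[OF P BX] herm BX_herm by simp
  finally show ?thesis
    unfolding proj_range_def X_def[symmetric] BXP .
qed

lemma proj_range_carrier_mat: "B \<in> carrier_mat n p \<Longrightarrow> proj_range B \<in> carrier_mat n n"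
  using is_mp_inverse_mp_inverse[of B n p] unfolding proj_range_def is_mp_inverse_def by auto

section \<open>Rank\<close>

lemma (in vec_space) rank_mult_right_le:
  assumes X: "X \<in> carrier_mat n p" and Y: "Y \<in> carrier_mat p q"
  shows "rank (X * Y) \<le> rank X"
proof -
  define W where "W = span (set (cols X))"
  have cX: "set (cols X) \<subseteq> carrier_vec n"
    using X cols_dim by (metis carrier_matD(1))
  have cXY: "set (cols (X * Y)) \<subseteq> carrier_vec n"
    using X Y cols_dim by (metis carrier_matD(1) mult_carrier_mat)
  have "set (cols (X * Y)) \<subseteq> W"
  proof
    fix x assume "x \<in> set (cols (X * Y))"
    then obtain j where j: "j < dim_col (X * Y)" and xj: "x = col (X * Y) j"
      by (metis cols_length cols_nth in_set_conv_nth)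
    with Y have j': "j < q" by simp
    have "x = X *\<^sub>v col Y j" using xj col_mult2[OF X Y j'] by simp
    moreover have "col Y j \<in> carrier_vec (dim_col X)" using X Y j' by simp
    moreover have "X *\<^sub>v col Y j \<in> carrier_vec (dim_row X)" by (intro carrier_vecI) simp
    ultimately have "x \<in> col_space X" unfolding col_space_eq[OF X] by blast
    then show "x \<in> W" unfolding W_def col_space_def .
  qed
  moreover have sW: "VectorSpace.subspace class_ring W V"
    unfolding W_def by (rule span_is_subspace[OF cX])
  ultimately have "span (set (cols (X * Y))) \<subseteq> W"
    unfolding VectorSpace.subspace_def by (intro span_is_subset) auto
  from nested_subspaces[OF sW span_is_subspace[OF cXY] this]
  have sub: "VectorSpace.subspace class_ring (span (set (cols (X * Y)))) (vs W)" .
  have fW: "vectorspace.fin_dim class_ring (vs W)"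
    unfolding W_def by (rule fin_dim_span_cols[OF X])
  have fXY: "vectorspace.fin_dim class_ring (span_vs (set (cols (X * Y))))"
    by (rule fin_dim_span_cols) (use X Y in auto)
  have "rank (X * Y) \<le> vectorspace.dim class_ring (vs W)"
    unfolding rank_def using vectorspace.subspace_dim[OF subspace_is_vs[OF sW] sub fW] fXY by auto
  also have "\<dots> = rank X"
    unfolding rank_def W_def by simp
  finally show ?thesis .
qed

lemma (in vec_space) rank_of_left_inverse:
  assumes C: "C \<in> carrier_mat n c" and L: "L \<in> carrier_mat c n" and LC: "L * C = 1\<^sub>m c"
  shows "rank C = c"
proof -
  have dist: "distinct (cols C)"
  proof (rule ccontr)
    assume "\<not> distinct (cols C)"
    then obtain i j where ij: "i < c" "j < c" "i \<noteq> j" "cols C ! i = cols C ! j"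
      using C unfolding distinct_conv_nth by auto
    then have "col (L * C) i = col (L * C) j"
      using C col_mult2[OF L C ij(1)] col_mult2[OF L C ij(2)] by simp
    then have "col (L * C) i $ i = col (L * C) j $ i" by simp
    then show False using ij unfolding LC by simp
  qed
  have "lin_indpt (set (cols C))"
  proof
    assume "lin_dep (set (cols C))"
    from lin_depE[OF C this dist] obtain v where v: "v \<in> carrier_vec c" "v \<noteq> 0\<^sub>v c"
      and Cv: "C *\<^sub>v v = 0\<^sub>v n" by blast
    have "v = L *\<^sub>v (C *\<^sub>v v)"
      using assoc_mult_mat_vec[OF L C v(1)] LC v(1) by simp
    also have "\<dots> = 0\<^sub>v c"
      unfolding Cv using L by (intro eq_vecI) (auto simp: scalar_prod_def)
    finally show False using v(2) by simp
  qed
  then show ?thesis by (rule lin_indpt_full_rank[OF C dist])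
qed

lemma le_crank_of_left_inverse:
  assumes B: "B \<in> carrier_mat n p" and E: "E \<in> carrier_mat p c" and L: "L \<in> carrier_mat c n"
    and LBE: "L * (B * E) = 1\<^sub>m c"
  shows "c \<le> crank B"
proof -
  have "c = vec_space.rank n (B * E)"
    by (rule vec_space.rank_of_left_inverse[symmetric, OF _ L LBE]) (use B E in simp)
  also have "\<dots> \<le> vec_space.rank n B"
    by (rule vec_space.rank_mult_right_le[OF B E])
  finally show ?thesis
    unfolding crank_def using B by simp
qed

lemma crank_le_dim_col: "B \<in> carrier_mat n p \<Longrightarrow> crank B \<le> p"
  unfolding crank_def by (simp add: vec_space.rank_le_nc)

lemma nonzero_mat_sandwich_one:
  fixes M :: "'a :: field mat"
  assumes M: "M \<in> carrier_mat p q" and nz: "M \<noteq> 0\<^sub>m p q"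
  obtains y e where "y \<in> carrier_mat 1 p" "e \<in> carrier_mat q 1" "y * (M * e) = 1\<^sub>m 1"
proof -
  obtain i j where ij: "i < p" "j < q" and c: "M $$ (i, j) \<noteq> 0"
    using nz M by (metis eq_matI carrier_matD index_zero_mat)
  define e :: "'a mat" where "e = mat q 1 (\<lambda>(l, _). if l = j then 1 else 0)"
  define y :: "'a mat" where "y = mat 1 p (\<lambda>(_, l). if l = i then 1 / M $$ (i, j) else 0)"
  have Me: "(M * e) $$ (i, 0) = M $$ (i, j)"
  proof -
    have "(M * e) $$ (i, 0) = (\<Sum>l \<in> {0..<q}. M $$ (i, l) * (if l = j then 1 else 0))"
      using ij M by (simp add: e_def scalar_prod_def)
    also have "\<dots> = (\<Sum>l \<in> {0..<q}. if l = j then M $$ (i, l) else 0)"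
      by (rule sum.cong) auto
    finally show ?thesis using ij by simp
  qed
  have "y * (M * e) = 1\<^sub>m 1"
  proof (rule eq_matI)
    fix a b assume "a < dim_row (1\<^sub>m 1)" "b < dim_col (1\<^sub>m 1)"
    then have ab: "a = 0" "b = 0" by auto
    have "(y * (M * e)) $$ (0, 0)
      = (\<Sum>l \<in> {0..<p}. (if l = i then 1 / M $$ (i, j) else 0) * (M * e) $$ (l, 0))"
      using M by (simp add: y_def e_def scalar_prod_def)
    also have "\<dots> = (\<Sum>l \<in> {0..<p}. if l = i then 1 / M $$ (i, j) * (M * e) $$ (l, 0) else 0)"
      by (rule sum.cong) auto
    also have "\<dots> = 1"
      using ij c Me by simp
    finally show "(y * (M * e)) $$ (a, b) = 1\<^sub>m 1 $$ (a, b)"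
      using ab by simp
  qed (auto simp: y_def e_def)
  then show ?thesis
    using that[of y e] by (simp add: y_def e_def)
qed

lemma four_block_mat_upper_left_inverse:
  fixes X Y Z :: "'a :: field mat"
  assumes X: "X \<in> carrier_mat t t" and Xi: "Xi \<in> carrier_mat t t" and XXi: "X * Xi = 1\<^sub>m t"
    and Y: "Y \<in> carrier_mat t p" and Z: "Z \<in> carrier_mat p p" and nz: "Z \<noteq> 0\<^sub>m p p"
  obtains L E where "L \<in> carrier_mat (t + 1) (t + p)" "E \<in> carrier_mat (t + p) (t + 1)"
    "L * (four_block_mat X Y (0\<^sub>m p t) Z * E) = 1\<^sub>m (t + 1)"
proof -
  obtain y e where y: "y \<in> carrier_mat 1 p" and e: "e \<in> carrier_mat p 1"
    and yZe: "y * (Z * e) = 1\<^sub>m 1"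
    using nonzero_mat_sandwich_one[OF Z nz] .
  define E where "E = four_block_mat Xi (- (Xi * (Y * e))) (0\<^sub>m p t) e"
  define L where "L = four_block_mat (1\<^sub>m t) (0\<^sub>m t p) (0\<^sub>m 1 t) y"
  have Ye: "Y * e \<in> carrier_mat t 1" using Y e by simp
  have XiYe: "Xi * (Y * e) \<in> carrier_mat t 1" using Xi Ye by simp
  have "X * (Xi * (Y * e)) = Y * e"
    unfolding assoc_mult_mat[OF X Xi Ye, symmetric] XXi by (rule left_mult_one_mat[OF Ye])
  then have "X * - (Xi * (Y * e)) + Y * e = 0\<^sub>m t 1"
    using Ye carrier_matD[OF X] carrier_matD[OF Xi] by simp
  then have "four_block_mat X Y (0\<^sub>m p t) Z * E
    = four_block_mat (1\<^sub>m t) (0\<^sub>m t 1) (0\<^sub>m p t) (Z * e)"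
    unfolding E_def using X Xi XXi Y Z e XiYe by (simp add: mult_four_block_mat_upper)
  then have "L * (four_block_mat X Y (0\<^sub>m p t) Z * E) = 1\<^sub>m (t + 1)"
    unfolding L_def using Z y e yZe by (simp add: mult_four_block_mat_upper)
  moreover have "L \<in> carrier_mat (t + 1) (t + p)"
    unfolding L_def by (rule four_block_carrier_mat[OF one_carrier_mat y])
  moreover have "E \<in> carrier_mat (t + p) (t + 1)"
    unfolding E_def by (rule four_block_carrier_mat[OF Xi e])
  ultimately show ?thesis using that by blast
qed

section \<open>The core-EP decomposition\<close>

locale core_ep_decomposition =
  fixes t p :: nat and A T S N U :: "complex mat"
  assumes T [simp]: "T \<in> carrier_mat t t" and T_invertible: "invertible_mat T"
    and S [simp]: "S \<in> carrier_mat t p" and N [simp]: "N \<in> carrier_mat p p"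
    and U: "unitary_mat (t + p) U"
    and decomposition: "A = U * four_block_mat T S (0\<^sub>m p t) N * adj U"
begin

abbreviation T_tilde :: "nat \<Rightarrow> complex mat" where
  "T_tilde j \<equiv> mat_sum t p (\<lambda>i. T ^\<^sub>m i * S * N ^\<^sub>m (j - 1 - i)) [0..<j]"

abbreviation ublock :: "complex mat \<Rightarrow> complex mat \<Rightarrow> complex mat \<Rightarrow> complex mat" where
  "ublock X Y Z \<equiv> four_block_mat X Y (0\<^sub>m p t) Z"

definition conj_U :: "complex mat \<Rightarrow> complex mat" where
  "conj_U M = U * M * adj U"

lemma U_carrier [simp]: "U \<in> carrier_mat (t + p) (t + p)"
  and adj_U_mult_U [simp]: "adj U * U = 1\<^sub>m (t + p)"
  and U_mult_adj_U [simp]: "U * adj U = 1\<^sub>m (t + p)"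
  using U unfolding unitary_mat_def by auto

lemma dim_U [simp]: "dim_row U = t + p" "dim_col U = t + p"
  by (rule carrier_matD[OF U_carrier])+

lemma adj_U_mult_U_mult [simp]: "dim_row Z = t + p \<Longrightarrow> adj U * (U * Z) = Z"
  by (simp add: assoc_mult_mat'[of "adj U" U Z, symmetric])

lemma inv_T [simp]: "inv_mat T \<in> carrier_mat t t"
  and T_mult_inv_T [simp]: "T * inv_mat T = 1\<^sub>m t"
  and inv_T_mult_T [simp]: "inv_mat T * T = 1\<^sub>m t"
  using inv_mat_inverts[OF T T_invertible] by auto

lemma dim_blocks [simp]:
  "dim_row T = t" "dim_col T = t" "dim_row S = t" "dim_col S = p" "dim_row N = p" "dim_col N = p"
  "dim_row (inv_mat T) = t" "dim_col (inv_mat T) = t"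
  using T S N inv_T by (simp_all only: carrier_matD)

lemma T_tilde_carrier [simp]: "T_tilde j \<in> carrier_mat t p"
  by simp

lemma mult_ublock:
  assumes "X \<in> carrier_mat t t" "Y \<in> carrier_mat t p" "Z \<in> carrier_mat p p"
    and "X' \<in> carrier_mat t t" "Y' \<in> carrier_mat t p" "Z' \<in> carrier_mat p p"
  shows "ublock X Y Z * ublock X' Y' Z' = ublock (X * X') (X * Y' + Y * Z') (Z * Z')"
  using assms by (intro mult_four_block_mat_upper) (simp_all add: carrier_matD)

lemma ublock_carrier [simp]:
  "X \<in> carrier_mat t t \<Longrightarrow> Z \<in> carrier_mat p p \<Longrightarrow> ublock X Y Z \<in> carrier_mat (t + p) (t + p)"
  by (rule four_block_carrier_mat)

lemma mat_adjoint_ublock: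
  "X \<in> carrier_mat t t \<Longrightarrow> Z \<in> carrier_mat p p \<Longrightarrow>
    adj (ublock X (0\<^sub>m t p) Z) = ublock (adj X) (0\<^sub>m t p) (adj Z)"
  by (simp add: mat_adjoint_four_block_mat[of X t t "0\<^sub>m t p" p "0\<^sub>m p t" p Z])

lemma conj_U_carrier [simp]:
  "M \<in> carrier_mat (t + p) (t + p) \<Longrightarrow> conj_U M \<in> carrier_mat (t + p) (t + p)"
  unfolding conj_U_def by (meson U_carrier mat_adjoint_carrier_mat mult_carrier_mat)

lemma conj_U_mult:
  assumes M: "M \<in> carrier_mat (t + p) (t + p)" and M': "M' \<in> carrier_mat (t + p) (t + p)"
  shows "conj_U M * conj_U M' = conj_U (M * M')"
  unfolding conj_U_def using carrier_matD[OF M] carrier_matD[OF M'] carrier_matD[OF U_carrier]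
  by (simp add: assoc_mult_mat')

lemma conj_U_pow:
  assumes M: "M \<in> carrier_mat (t + p) (t + p)"
  shows "conj_U M ^\<^sub>m j = conj_U (M ^\<^sub>m j)"
proof (induct j)
  case 0
  then show ?case
    unfolding conj_U_def using carrier_matD[OF M] carrier_matD[OF U_carrier] by simp
next
  case (Suc j)
  then show ?case using M by (simp add: conj_U_mult)
qed

lemma mat_adjoint_conj_U:
  assumes M: "M \<in> carrier_mat (t + p) (t + p)"
  shows "adj (conj_U M) = conj_U (adj M)"
proof -
  have "adj (U * M * adj U) = U * adj (U * M)"
    using mat_adjoint_mult[OF mult_carrier_mat[OF U_carrier M]
        mat_adjoint_carrier_mat[OF U_carrier]] by simp
  also have "\<dots> = U * adj M * adj U"
    unfolding mat_adjoint_mult[OF U_carrier M] using M by (simp add: assoc_mult_mat')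
  finally show ?thesis unfolding conj_U_def .
qed

definition C :: "complex mat" where
  "C = conj_U (ublock (inv_mat T) (0\<^sub>m t p) (0\<^sub>m p p))"

definition Q :: "complex mat" where
  "Q = conj_U (ublock (1\<^sub>m t) (0\<^sub>m t p) (0\<^sub>m p p))"

lemma A_conj_U: "A = conj_U (ublock T S N)"
  unfolding conj_U_def by (rule decomposition)

lemma A_carrier [simp]: "A \<in> carrier_mat (t + p) (t + p)"
  unfolding A_conj_U by simp

lemma A_pow: "A ^\<^sub>m j = conj_U (ublock (T ^\<^sub>m j) (T_tilde j) (N ^\<^sub>m j))"
  unfolding A_conj_U by (simp add: conj_U_pow pow_four_block_mat_upper)

lemma pow_N_eq_zero_of_crank:
  assumes "crank (A ^\<^sub>m k) = t"
  shows "N ^\<^sub>m k = 0\<^sub>m p p"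
proof (rule ccontr)
  assume "N ^\<^sub>m k \<noteq> 0\<^sub>m p p"
  moreover have "T ^\<^sub>m k * inv_mat T ^\<^sub>m k = 1\<^sub>m t"
    by (rule pow_mat_left_inverse) simp_all
  ultimately obtain L E where L: "L \<in> carrier_mat (t + 1) (t + p)"
    and E: "E \<in> carrier_mat (t + p) (t + 1)"
    and LE: "L * (ublock (T ^\<^sub>m k) (T_tilde k) (N ^\<^sub>m k) * E) = 1\<^sub>m (t + 1)"
    using four_block_mat_upper_left_inverse[of "T ^\<^sub>m k" t "inv_mat T ^\<^sub>m k" "T_tilde k" p
        "N ^\<^sub>m k"] by auto
  have M: "ublock (T ^\<^sub>m k) (T_tilde k) (N ^\<^sub>m k) \<in> carrier_mat (t + p) (t + p)"
    by (simp add: four_block_carrier_mat)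
  have "L * adj U * (A ^\<^sub>m k * (U * E)) = L * (ublock (T ^\<^sub>m k) (T_tilde k) (N ^\<^sub>m k) * E)"
    unfolding A_pow unfolding conj_U_def
    using carrier_matD[OF L] carrier_matD[OF E] carrier_matD[OF M] by (simp add: assoc_mult_mat')
  then have "t + 1 \<le> crank (A ^\<^sub>m k)"
    using LE L E
    by (intro le_crank_of_left_inverse[of _ "t + p" "t + p" "U * E" _ "L * adj U"]) auto
  with assms show False by simp
qed

lemma Q_carrier [simp]: "Q \<in> carrier_mat (t + p) (t + p)"
  unfolding Q_def by simp

lemma C_carrier [simp]: "C \<in> carrier_mat (t + p) (t + p)"
  unfolding C_def by simp

lemma Q_hermitian: "adj Q = Q"
  unfolding Q_def by (simp add: mat_adjoint_conj_U mat_adjoint_ublock)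

lemma Q_idempotent: "Q * Q = Q"
  unfolding Q_def by (simp add: conj_U_mult mult_ublock)

lemma A_mult_C: "A * C = Q"
  unfolding A_conj_U C_def Q_def by (simp add: conj_U_mult mult_ublock)

lemma range_conj_U_ublock:
  assumes X: "X \<in> carrier_mat t t" and X': "X' \<in> carrier_mat t t" and XX': "X * X' = 1\<^sub>m t"
    and Y: "Y \<in> carrier_mat t p"
  shows "mat_range (conj_U (ublock X Y (0\<^sub>m p p))) = mat_range Q"
proof -
  note dims = carrier_matD[OF X] carrier_matD[OF X'] carrier_matD[OF Y]
  have B: "ublock X Y (0\<^sub>m p p) \<in> carrier_mat (t + p) (t + p)"
    and B': "ublock X' (0\<^sub>m t p) (0\<^sub>m p p) \<in> carrier_mat (t + p) (t + p)"
    and Q': "ublock (1\<^sub>m t) (0\<^sub>m t p) (0\<^sub>m p p) \<in> carrier_mat (t + p) (t + p)"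
    using X X' by simp_all
  have "conj_U (ublock X Y (0\<^sub>m p p)) = Q * conj_U (ublock X Y (0\<^sub>m p p))"
    unfolding Q_def conj_U_mult[OF Q' B] using X Y dims by (simp add: mult_ublock)
  moreover have "Q = conj_U (ublock X Y (0\<^sub>m p p)) * conj_U (ublock X' (0\<^sub>m t p) (0\<^sub>m p p))"
    unfolding Q_def conj_U_mult[OF B B'] using X X' Y XX' dims by (simp add: mult_ublock)
  ultimately show ?thesis
    by (rule mat_range_eqI[OF conj_U_carrier[OF B] Q_carrier conj_U_carrier[OF B]
          conj_U_carrier[OF B']])
qed

lemma range_C: "mat_range C = mat_range Q"
  unfolding C_def by (rule range_conj_U_ublock[of _ T]) simp_all

lemma range_adj_C: "mat_range (adj C) = mat_range Q"
proof -
  have "adj (inv_mat T) * adj T = 1\<^sub>m t"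
    using mat_adjoint_mult[OF T inv_T] by simp
  then show ?thesis
    unfolding C_def
    by (simp add: mat_adjoint_conj_U mat_adjoint_ublock range_conj_U_ublock[of _ "adj T"])
qed

lemma range_A_pow:
  assumes "N ^\<^sub>m k = 0\<^sub>m p p"
  shows "mat_range (A ^\<^sub>m k) = mat_range Q"
proof -
  have "T ^\<^sub>m k * inv_mat T ^\<^sub>m k = 1\<^sub>m t"
    by (rule pow_mat_left_inverse) simp_all
  then show ?thesis
    unfolding A_pow assms by (intro range_conj_U_ublock[of _ "inv_mat T ^\<^sub>m k"]) simp_all
qed

lemma core_ep_inverse_A:
  assumes "N ^\<^sub>m mat_index A = 0\<^sub>m p p"
  shows "core_ep_inverse A = C"
  by (rule core_ep_inverse_eqI[OF _ C_carrier Q_carrier Q_hermitian Q_idempotent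
        range_A_pow[OF assms, symmetric] A_mult_C range_C range_adj_C]) (simp add: A_conj_U)

lemma mult_ublock_pow_right_inverse:
  assumes X: "X \<in> carrier_mat p p"
  shows "ublock (T ^\<^sub>m m) (T_tilde m) (N ^\<^sub>m m)
      * ublock (inv_mat T ^\<^sub>m m) (- (inv_mat T ^\<^sub>m m * T_tilde m * X)) X
    = ublock (1\<^sub>m t) (0\<^sub>m t p) (N ^\<^sub>m m * X)"
proof -
  have TX: "T_tilde m * X \<in> carrier_mat t p"
    using mult_carrier_mat[OF T_tilde_carrier X] .
  have W: "- (inv_mat T ^\<^sub>m m * T_tilde m * X) \<in> carrier_mat t p"
    by (intro uminus_carrier_mat mult_carrier_mat[OF _ X] mult_carrier_mat[OF _ T_tilde_carrier])
      simp
  have Tpow: "T ^\<^sub>m m * inv_mat T ^\<^sub>m m = 1\<^sub>m t"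
    by (rule pow_mat_left_inverse) simp_all
  then have "T ^\<^sub>m m * (inv_mat T ^\<^sub>m m * (T_tilde m * X)) = T_tilde m * X"
    using TX by (simp add: assoc_mult_mat'[of "T ^\<^sub>m m" "inv_mat T ^\<^sub>m m", symmetric])
  then have corner: "T ^\<^sub>m m * - (inv_mat T ^\<^sub>m m * T_tilde m * X) + T_tilde m * X = 0\<^sub>m t p"
    using TX carrier_matD[OF X] by (simp add: assoc_mult_mat')
  have "ublock (T ^\<^sub>m m) (T_tilde m) (N ^\<^sub>m m)
      * ublock (inv_mat T ^\<^sub>m m) (- (inv_mat T ^\<^sub>m m * T_tilde m * X)) X
    = ublock (T ^\<^sub>m m * inv_mat T ^\<^sub>m m)
        (T ^\<^sub>m m * - (inv_mat T ^\<^sub>m m * T_tilde m * X) + T_tilde m * X) (N ^\<^sub>m m * X)"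
    by (rule mult_ublock[OF _ _ _ _ W X]) simp_all
  then show ?thesis
    unfolding corner Tpow .
qed

lemma proj_range_A_pow:
  "proj_range (A ^\<^sub>m m) = conj_U (ublock (1\<^sub>m t) (0\<^sub>m t p) (proj_range (N ^\<^sub>m m)))"
proof -
  define X where "X = mp_inverse (N ^\<^sub>m m)"
  have Nm: "N ^\<^sub>m m \<in> carrier_mat p p" by simp
  have X: "X \<in> carrier_mat p p" and NXN: "N ^\<^sub>m m * X * N ^\<^sub>m m = N ^\<^sub>m m"
    and herm: "adj (N ^\<^sub>m m * X) = N ^\<^sub>m m * X"
    using is_mp_inverse_mp_inverse[OF Nm] unfolding X_def is_mp_inverse_def by auto
  have NX: "N ^\<^sub>m m * X \<in> carrier_mat p p"
    using mult_carrier_mat[OF Nm X] .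
  define Z where "Z = ublock (inv_mat T ^\<^sub>m m) (- (inv_mat T ^\<^sub>m m * T_tilde m * X)) X"
  have Z: "Z \<in> carrier_mat (t + p) (t + p)" unfolding Z_def using X by simp
  define P where "P = conj_U (ublock (1\<^sub>m t) (0\<^sub>m t p) (N ^\<^sub>m m * X))"
  have "proj_range (A ^\<^sub>m m) = P"
  proof (rule proj_range_eqI[OF _ _ _ _ conj_U_carrier[OF Z]])
    show "A ^\<^sub>m m \<in> carrier_mat (t + p) (t + p)"
      by simp
    show "P \<in> carrier_mat (t + p) (t + p)"
      unfolding P_def using NX by simp
    show "adj P = P"
      unfolding P_def using NX herm by (simp add: mat_adjoint_conj_U mat_adjoint_ublock)
    show "P * A ^\<^sub>m m = A ^\<^sub>m m"
      unfolding P_def A_pow using NX NXN by (simp add: conj_U_mult mult_ublock)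
    show "P = A ^\<^sub>m m * conj_U Z"
      unfolding P_def A_pow
        conj_U_mult[OF ublock_carrier[OF pow_carrier_mat[OF T] pow_carrier_mat[OF N]] Z]
      unfolding Z_def mult_ublock_pow_right_inverse[OF X] ..
  qed
  then show ?thesis
    unfolding proj_range_def P_def X_def .
qed

lemma m_weak_group_inverse_A:
  assumes "core_ep_inverse A = C"
  shows "m_weak_group_inverse m A
    = conj_U (ublock (inv_mat T) (inv_mat T ^\<^sub>m (m + 1) * T_tilde m) (0\<^sub>m p p))"
proof -
  have "C ^\<^sub>m (m + 1) = conj_U (ublock (inv_mat T ^\<^sub>m (m + 1)) (0\<^sub>m t p) (0\<^sub>m p p))"
    unfolding C_def conj_U_pow[OF ublock_carrier[OF inv_T zero_carrier_mat]]
      pow_four_block_mat[OF inv_T zero_carrier_mat] by simp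
  moreover have "inv_mat T ^\<^sub>m (m + 1) * T ^\<^sub>m m = inv_mat T"
  proof -
    have "inv_mat T ^\<^sub>m (m + 1) * T ^\<^sub>m (m + 1) = 1\<^sub>m t"
      by (rule pow_mat_left_inverse) simp_all
    moreover have "inv_mat T ^\<^sub>m (m + 1) * T ^\<^sub>m m
      = inv_mat T ^\<^sub>m (m + 1) * T ^\<^sub>m (m + 1) * inv_mat T"
      by (simp add: assoc_mult_mat')
    ultimately show ?thesis
      by simp
  qed
  moreover have "inv_mat T ^\<^sub>m (m + 1) * T_tilde m \<in> carrier_mat t p"
    by (rule mult_carrier_mat[OF pow_carrier_mat[OF inv_T] T_tilde_carrier])
  ultimately show ?thesis
    unfolding m_weak_group_inverse_def assms A_pow
    by (simp add: conj_U_mult mult_ublock del: pow_mat.simps(2))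
qed

lemma m_weak_core_inverse_A:
  assumes "core_ep_inverse A = C"
  shows "m_weak_core_inverse m A = conj_U (ublock (inv_mat T)
    (inv_mat T ^\<^sub>m (m + 1) * T_tilde m * proj_range (N ^\<^sub>m m)) (0\<^sub>m p p))"
proof -
  have "inv_mat T ^\<^sub>m (m + 1) * T_tilde m \<in> carrier_mat t p"
    by (rule mult_carrier_mat[OF pow_carrier_mat[OF inv_T] T_tilde_carrier])
  moreover have "proj_range (N ^\<^sub>m m) \<in> carrier_mat p p"
    by (rule proj_range_carrier_mat[OF pow_carrier_mat[OF N]])
  ultimately show ?thesis
    unfolding m_weak_core_inverse_def m_weak_group_inverse_A[OF assms] proj_range_A_pow
    by (simp add: conj_U_mult mult_ublock del: pow_mat.simps(2))
qed

end

theorem theorem4p6: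
  fixes A U T S N :: "complex mat" and n t k m :: nat
  assumes A: "A \<in> carrier_mat n n"
    and k: "k = mat_index A"
    and t: "t = crank (A ^\<^sub>m k)"
    and U: "unitary_mat n U"
    and T: "T \<in> carrier_mat t t" "invertible_mat T"
    and S: "S \<in> carrier_mat t (n - t)"
    and N: "N \<in> carrier_mat (n - t) (n - t)" "nil_index N = k"
    and dec: "A = U * four_block_mat T S (0\<^sub>m (n - t) t) N * adj U"
    and m: "m \<ge> 1"
  shows "m_weak_core_inverse m A =
    U * four_block_mat (inv_mat T)
          ((inv_mat T) ^\<^sub>m (m+1) *
             mat_sum t (n - t) (\<lambda>i. T ^\<^sub>m i * S * N ^\<^sub>m (m - 1 - i)) [0..<m] * proj_range (N ^\<^sub>m m))
          (0\<^sub>m (n - t) t) (0\<^sub>m (n - t) (n - t)) * adj U"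
proof -
  have "t + (n - t) = n"
    using t crank_le_dim_col[OF pow_carrier_mat[OF A]] by simp
  then interpret core_ep_decomposition t "n - t" A T S N U
    using T S N(1) U dec by unfold_locales simp_all
  have "N ^\<^sub>m k = 0\<^sub>m (n - t) (n - t)"
    using pow_N_eq_zero_of_crank t by simp
  then have "core_ep_inverse A = C"
    using core_ep_inverse_A k by simp
  then show ?thesis
    using m_weak_core_inverse_A unfolding conj_U_def by simp
qed

end
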